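(* Let $M \in \{0,1\}^{n \times n}$ be a $d$-twin-ordered binary matrix. Then $M$ can be preprocessed in time $\mathcal{O}(n^2+dn)$ so that afterwards, for an arbitrary column vector $v \in \mathbb{R}^n$, each of the products $Mv$ and $v^\intercal M$ can be computed in time $\mathcal{O}(dn)$.
   Context: Running times assume unit-cost arithmetic operations on scalars. Definitions. A division of an $n\times n$ matrix $M$ is a pair $(\mathcal{R},\mathscr{C})$ of partitions of $[n]$ into contiguous non-empty intervals; the cell $(i,j)$ is the submatrix of $M$ with rows in the $i$-th interval of $\mathcal{R}$ and columns in the $j$-th interval of $\mathscr{C}$; a cell is constant if all its entries are equal. A row (resp. column) of the division is the set of cells sharing a given interval of $\mathcal{R}$ (resp. $\mathscr{C}$). A merge sequence of $M$ is a sequence of divisions $(\mathcal{R}_{2n-1},\mathscr{C}_{2n-1}),\dots,(\mathcal{R}_1,\mathscr{C}_1)$ where $\mathcal{R}_{2n-1}=\mathscr{C}_{2n-1}$ is the partition into singletons, $\mathcal{R}_1=\mathscr{C}_1=\{[n]\}$, and each division is obtained from the previous one by merging two adjacent intervals of either the row partition or the column partition (not both). It is $d$-wide if in every division every row and every column contains at most $d$ non-constant cells. $M$ is $d$-twin-ordered if it (in its given row and column order) admits a $d$-wide merge sequence. *)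

theory Defs
  imports Complex_Main
begin

text \<open>Indices are 0-based: [n] is rendered as {..<n}. A binary matrix is M :: nat => nat => bool,
  only entries with indices < n are relevant.\<close>

definition interval_partition :: "nat \<Rightarrow> nat set set \<Rightarrow> bool" where
  "interval_partition n P \<longleftrightarrow>
     (\<forall>I\<in>P. I \<noteq> {} \<and> (\<exists>a b. I = {a..b})) \<and> \<Union>P = {..<n} \<and>
     (\<forall>I\<in>P. \<forall>J\<in>P. I \<noteq> J \<longrightarrow> I \<inter> J = {})"

type_synonym division = "nat set set \<times> nat set set"

definition is_division :: "nat \<Rightarrow> division \<Rightarrow> bool" where
  "is_division n D \<longleftrightarrow> interval_partition n (fst D) \<and> interval_partition n (snd D)"

definition merge_step :: "nat set set \<Rightarrow> nat set set \<Rightarrow> bool" where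
  "merge_step P P' \<longleftrightarrow>
     (\<exists>I\<in>P. \<exists>J\<in>P. (\<exists>a b c. I = {a..b} \<and> J = {Suc b..c}) \<and> P' = insert (I \<union> J) (P - {I, J}))"

definition division_step :: "division \<Rightarrow> division \<Rightarrow> bool" where
  "division_step D D' \<longleftrightarrow>
     (merge_step (fst D) (fst D') \<and> snd D' = snd D) \<or> (fst D' = fst D \<and> merge_step (snd D) (snd D'))"

definition singletons :: "nat \<Rightarrow> nat set set" where
  "singletons n = (\<lambda>i. {i}) ` {..<n}"

text \<open>A merge sequence is given as the list [(R_{2n-1},C_{2n-1}), ..., (R_1,C_1)].\<close>
definition merge_sequence :: "nat \<Rightarrow> division list \<Rightarrow> bool" where
  "merge_sequence n ds \<longleftrightarrow>
     length ds = 2 * n - 1 \<and> ds \<noteq> [] \<and>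
     (\<forall>D\<in>set ds. is_division n D) \<and>
     hd ds = (singletons n, singletons n) \<and>
     last ds = ({{..<n}}, {{..<n}}) \<and>
     (\<forall>k. Suc k < length ds \<longrightarrow> division_step (ds ! k) (ds ! Suc k))"

definition constant_cell :: "(nat \<Rightarrow> nat \<Rightarrow> bool) \<Rightarrow> nat set \<Rightarrow> nat set \<Rightarrow> bool" where
  "constant_cell M I J \<longleftrightarrow> (\<forall>i\<in>I. \<forall>j\<in>J. \<forall>i'\<in>I. \<forall>j'\<in>J. M i j = M i' j')"

definition wide_division :: "nat \<Rightarrow> (nat \<Rightarrow> nat \<Rightarrow> bool) \<Rightarrow> division \<Rightarrow> bool" where
  "wide_division d M D \<longleftrightarrow>
     (\<forall>I\<in>fst D. card {J\<in>snd D. \<not> constant_cell M I J} \<le> d) \<and>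
     (\<forall>J\<in>snd D. card {I\<in>fst D. \<not> constant_cell M I J} \<le> d)"

definition twin_ordered :: "nat \<Rightarrow> nat \<Rightarrow> (nat \<Rightarrow> nat \<Rightarrow> bool) \<Rightarrow> bool" where
  "twin_ordered n d M \<longleftrightarrow> (\<exists>ds. merge_sequence n ds \<and> (\<forall>D\<in>set ds. wide_division d M D))"

text \<open>Every executed statement / loop test / branch costs one time unit (programs are fixed,
  so expression sizes are constants).\<close>

datatype iexp = IConst int | IRd iexp | IAdd iexp iexp | ISub iexp iexp | IMul iexp iexp

datatype rexp = ROfInt iexp | RRd iexp | RAdd rexp rexp | RSub rexp rexp | RMul rexp rexp
  | RDiv rexp rexp

datatype bexp = ILe iexp iexp | IEq iexp iexp | RLe rexp rexp | REq rexp rexp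
  | BNot bexp | BAnd bexp bexp

datatype com = Skip | IStore iexp iexp | RStore iexp rexp | Seq com com
  | If bexp com com | While bexp com

type_synonym state = "(int \<Rightarrow> int) \<times> (int \<Rightarrow> real)"

fun ieval :: "iexp \<Rightarrow> (int \<Rightarrow> int) \<Rightarrow> int" where
  "ieval (IConst c) m = c"
| "ieval (IRd a) m = m (ieval a m)"
| "ieval (IAdd a b) m = ieval a m + ieval b m"
| "ieval (ISub a b) m = ieval a m - ieval b m"
| "ieval (IMul a b) m = ieval a m * ieval b m"

fun reval :: "rexp \<Rightarrow> state \<Rightarrow> real" where
  "reval (ROfInt a) s = of_int (ieval a (fst s))"
| "reval (RRd a) s = snd s (ieval a (fst s))"
| "reval (RAdd a b) s = reval a s + reval b s"
| "reval (RSub a b) s = reval a s - reval b s"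
| "reval (RMul a b) s = reval a s * reval b s"
| "reval (RDiv a b) s = reval a s / reval b s"

fun beval :: "bexp \<Rightarrow> state \<Rightarrow> bool" where
  "beval (ILe a b) s = (ieval a (fst s) \<le> ieval b (fst s))"
| "beval (IEq a b) s = (ieval a (fst s) = ieval b (fst s))"
| "beval (RLe a b) s = (reval a s \<le> reval b s)"
| "beval (REq a b) s = (reval a s = reval b s)"
| "beval (BNot b) s = (\<not> beval b s)"
| "beval (BAnd a b) s = (beval a s \<and> beval b s)"

inductive big_step :: "com \<Rightarrow> state \<Rightarrow> nat \<Rightarrow> state \<Rightarrow> bool" where
  Skip: "big_step Skip s 1 s"
| IStore: "big_step (IStore a e) s 1 ((fst s)(ieval a (fst s) := ieval e (fst s)), snd s)"
| RStore: "big_step (RStore a e) s 1 (fst s, (snd s)(ieval a (fst s) := reval e s))"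
| Seq: "big_step c1 s t1 s' \<Longrightarrow> big_step c2 s' t2 s'' \<Longrightarrow> big_step (Seq c1 c2) s (t1 + t2) s''"
| IfT: "beval b s \<Longrightarrow> big_step c1 s t s' \<Longrightarrow> big_step (If b c1 c2) s (Suc t) s'"
| IfF: "\<not> beval b s \<Longrightarrow> big_step c2 s t s' \<Longrightarrow> big_step (If b c1 c2) s (Suc t) s'"
| WhileF: "\<not> beval b s \<Longrightarrow> big_step (While b c) s 1 s"
| WhileT: "beval b s \<Longrightarrow> big_step c s t s' \<Longrightarrow> big_step (While b c) s' t' s'' \<Longrightarrow>
           big_step (While b c) s (Suc (t + t')) s''"

definition pre_input :: "nat \<Rightarrow> nat \<Rightarrow> (nat \<Rightarrow> nat \<Rightarrow> bool) \<Rightarrow> state" where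
  "pre_input n d M =
     ((\<lambda>a. if a = 0 then int n else if a = 1 then int d
           else if 2 \<le> a \<and> a < 2 + int n * int n
             then (if M (nat (a - 2) div n) (nat (a - 2) mod n) then 1 else 0)
           else 0),
      (\<lambda>_. 0))"

definition query_input :: "nat \<Rightarrow> (nat \<Rightarrow> real) \<Rightarrow> state \<Rightarrow> state" where
  "query_input n v s =
     (fst s, (\<lambda>a. if - int n \<le> a \<and> a < 0 then v (nat (- a - 1)) else snd s a))"

definition out_addr :: "nat \<Rightarrow> nat \<Rightarrow> int" where
  "out_addr n i = - int n - 1 - int i"

end

theory Submission
  imports Defs
begin

text \<open>
  Let \<Delta> be the mixed second difference of M, entries outside the matrix counting as 0, so that
  M i j is the sum of \<Delta> over the rectangle [0..i] \<times> [0..j]. With the suffix sums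
  S j = v j + ... + v (n-1), (M v) i is the sum of \<Delta> i' j * S j over all i' \<le> i and all j:
  after computing S, one pass over the nonzero entries of \<Delta> and one prefix-sum pass compute
  M v, and v^T M is computed the same way with the roles of rows and columns exchanged.
  Preprocessing lists the nonzero entries of \<Delta> in time O(n^2), so everything hinges on there
  being only O(d n) of them.

  Off row and column 0, \<Delta> i j \<noteq> 0 forces M to change horizontally inside rows i-1 or i of
  columns j-1, j. Call such a corner live in a division while both row pairs and both column
  pairs are still separated. All corners are live in the finest division and none in the
  coarsest. Merging two column intervals kills only corners whose columns become joined, and
  each killed corner sits directly below or at the top of a row interval whose cell in the merged
  column is non-constant; so a d-wide merge sequence kills at most 2 d corners per step, in
  2 n - 2 steps.
\<close>

section \<open>Timed Hoare triples for the machine model\<close>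

definition terminates_within :: "com \<Rightarrow> state \<Rightarrow> (state \<Rightarrow> bool) \<Rightarrow> nat \<Rightarrow> bool" where
  "terminates_within c s Q T \<longleftrightarrow> (\<exists>t s'. big_step c s t s' \<and> t \<le> T \<and> Q s')"

lemma terminates_within_mono:
  "terminates_within c s Q T \<Longrightarrow> T \<le> T' \<Longrightarrow> (\<And>s. Q s \<Longrightarrow> Q' s) \<Longrightarrow> terminates_within c s Q' T'"
  unfolding terminates_within_def by (meson le_trans)

lemma terminates_within_Skip: "1 \<le> T \<Longrightarrow> Q s \<Longrightarrow> terminates_within Skip s Q T"
  unfolding terminates_within_def using big_step.Skip by blast

lemma terminates_within_IStore:
  "1 \<le> T \<Longrightarrow> Q (m(ieval a m := ieval e m), r) \<Longrightarrow> terminates_within (IStore a e) (m, r) Q T"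
  unfolding terminates_within_def using big_step.IStore[of a e "(m, r)"] by fastforce

lemma terminates_within_RStore:
  "1 \<le> T \<Longrightarrow> Q (m, r(ieval a m := reval e (m, r))) \<Longrightarrow> terminates_within (RStore a e) (m, r) Q T"
  unfolding terminates_within_def using big_step.RStore[of a e "(m, r)"] by fastforce

lemma terminates_within_Seq:
  "terminates_within c1 s Q T1 \<Longrightarrow> (\<And>s'. Q s' \<Longrightarrow> terminates_within c2 s' R T2) \<Longrightarrow>
    terminates_within (Seq c1 c2) s R (T1 + T2)"
  unfolding terminates_within_def by (meson add_le_mono big_step.Seq)

lemma terminates_within_If:
  "1 \<le> T \<Longrightarrow> (beval b s \<Longrightarrow> terminates_within c1 s Q (T - 1)) \<Longrightarrow>
    (\<not> beval b s \<Longrightarrow> terminates_within c2 s Q (T - 1)) \<Longrightarrow> terminates_within (If b c1 c2) s Q T"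
  unfolding terminates_within_def by (metis Suc_diff_le Suc_le_mono big_step.IfF big_step.IfT diff_Suc_1)

text \<open>The rules below take the first command of a sequence; with them, straight-line code is
  executed symbolically by a single \<open>intro\<close> followed by \<open>simp\<close>.\<close>

lemma terminates_within_Seq_IStore:
  assumes "1 \<le> T" and "terminates_within c (m(ieval a m := ieval e m), r) Q (T - 1)"
  shows "terminates_within (Seq (IStore a e) c) (m, r) Q T"
proof -
  have "terminates_within (Seq (IStore a e) c) (m, r) Q (1 + (T - 1))"
    by (rule terminates_within_Seq[where Q = "\<lambda>s. s = (m(ieval a m := ieval e m), r)"])
      (use assms(2) in \<open>auto intro: terminates_within_IStore\<close>)
  then show ?thesis using assms(1) by simp
qed

lemma terminates_within_Seq_RStore:
  assumes "1 \<le> T" and "terminates_within c (m, r(ieval a m := reval e (m, r))) Q (T - 1)"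
  shows "terminates_within (Seq (RStore a e) c) (m, r) Q T"
proof -
  have "terminates_within (Seq (RStore a e) c) (m, r) Q (1 + (T - 1))"
    by (rule terminates_within_Seq[where Q = "\<lambda>s. s = (m, r(ieval a m := reval e (m, r)))"])
      (use assms(2) in \<open>auto intro: terminates_within_RStore\<close>)
  then show ?thesis using assms(1) by simp
qed

lemma terminates_within_Seq_Skip:
  assumes "1 \<le> T" and "terminates_within c s Q (T - 1)"
  shows "terminates_within (Seq Skip c) s Q T"
proof -
  have "terminates_within (Seq Skip c) s Q (1 + (T - 1))"
    by (rule terminates_within_Seq[where Q = "\<lambda>s'. s' = s"])
      (use assms(2) in \<open>auto intro: terminates_within_Skip\<close>)
  then show ?thesis using assms(1) by simp
qed

lemma big_step_Seq_assoc:
  assumes "big_step (Seq a (Seq b c)) s t s'"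
  shows "big_step (Seq (Seq a b) c) s t s'"
proof -
  from assms obtain t1 t23 s1
    where 1: "big_step a s t1 s1" "big_step (Seq b c) s1 t23 s'" "t = t1 + t23"
    by (cases rule: big_step.cases) auto
  from 1(2) obtain t2 t3 s2 where 2: "big_step b s1 t2 s2" "big_step c s2 t3 s'" "t23 = t2 + t3"
    by (cases rule: big_step.cases) auto
  have "big_step (Seq (Seq a b) c) s ((t1 + t2) + t3) s'"
    using 1 2 by (meson big_step.Seq)
  then show ?thesis using 1 2 by (simp add: add.assoc)
qed

lemma terminates_within_Seq_assoc:
  "terminates_within (Seq a (Seq b c)) s Q T \<Longrightarrow> terminates_within (Seq (Seq a b) c) s Q T"
  unfolding terminates_within_def by (meson big_step_Seq_assoc)

lemma big_step_Seq_If: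
  assumes "big_step (Seq (if beval b s then c1 else c2) c) s t s'"
  shows "big_step (Seq (If b c1 c2) c) s (Suc t) s'"
proof -
  from assms obtain t1 t2 s1
    where 1: "big_step (if beval b s then c1 else c2) s t1 s1" "big_step c s1 t2 s'" "t = t1 + t2"
    by (cases rule: big_step.cases) auto
  then have "big_step (If b c1 c2) s (Suc t1) s1"
    by (cases "beval b s") (auto intro: big_step.IfT big_step.IfF)
  from big_step.Seq[OF this 1(2)] show ?thesis using 1(3) by simp
qed

lemma terminates_within_Seq_If:
  assumes "1 \<le> T"
    and "beval b s \<Longrightarrow> terminates_within (Seq c1 c) s Q (T - 1)"
    and "\<not> beval b s \<Longrightarrow> terminates_within (Seq c2 c) s Q (T - 1)"
  shows "terminates_within (Seq (If b c1 c2) c) s Q T"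
proof -
  have "terminates_within (Seq (if beval b s then c1 else c2) c) s Q (T - 1)"
    using assms(2,3) by auto
  then obtain t s' where "big_step (Seq (if beval b s then c1 else c2) c) s t s'" "t \<le> T - 1" "Q s'"
    unfolding terminates_within_def by blast
  then show ?thesis
    unfolding terminates_within_def using assms(1)
    by (intro exI[of _ "Suc t"] exI[of _ s']) (auto intro: big_step_Seq_If)
qed

lemma terminates_within_While:
  assumes step: "\<And>k s. k < N \<Longrightarrow> I k s \<Longrightarrow> beval b s \<and> terminates_within c s (I (Suc k)) T"
    and stop: "\<And>s. I N s \<Longrightarrow> \<not> beval b s"
    and init: "I 0 s"
  shows "terminates_within (While b c) s (I N) (N * Suc T + 1)"
proof -
  have "j \<le> N \<Longrightarrow> I (N - j) s \<Longrightarrow> terminates_within (While b c) s (I N) (j * Suc T + 1)" for j s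
  proof (induction j arbitrary: s)
    case 0
    then show ?case
      using stop[of s] big_step.WhileF[of b s c] unfolding terminates_within_def by fastforce
  next
    case (Suc j)
    have "N - Suc j < N" and next_index: "Suc (N - Suc j) = N - j"
      using Suc.prems by auto
    with step Suc.prems obtain t s'
      where body: "beval b s" "big_step c s t s'" "t \<le> T" "I (N - j) s'"
      unfolding terminates_within_def by metis
    with Suc.IH[of s'] Suc.prems obtain t' s''
      where loop: "big_step (While b c) s' t' s''" "t' \<le> j * Suc T + 1" "I N s''"
      unfolding terminates_within_def by auto
    have "big_step (While b c) s (Suc (t + t')) s''"
      using body loop big_step.WhileT by blast
    moreover have "Suc (t + t') \<le> Suc j * Suc T + 1"
      using body loop by simp
    ultimately show ?case
      using loop unfolding terminates_within_def by blast
  qed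
  from this[of N] init show ?thesis by simp
qed

section \<open>Few nonzero mixed differences in twin-ordered matrices\<close>

definition mixed_diff :: "(nat \<Rightarrow> nat \<Rightarrow> bool) \<Rightarrow> nat \<Rightarrow> nat \<Rightarrow> int" where
  "mixed_diff M i j = of_bool (M i j) - (if 0 < i then of_bool (M (i - 1) j) else 0)
     - (if 0 < j then of_bool (M i (j - 1)) else 0)
     + (if 0 < i \<and> 0 < j then of_bool (M (i - 1) (j - 1)) else 0)"

lemma mixed_diff_transpose: "mixed_diff (\<lambda>i j. M j i) i j = mixed_diff M j i"
  unfolding mixed_diff_def by auto

definition corners :: "nat \<Rightarrow> (nat \<Rightarrow> nat \<Rightarrow> bool) \<Rightarrow> (nat \<times> nat) set" where
  "corners n M = {(i, j). 0 < i \<and> i < n \<and> 0 < j \<and> j < n \<and> mixed_diff M i j \<noteq> 0}"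

lemma corner_imp_row_change:
  assumes "(i, j) \<in> corners n M"
  shows "M (i - 1) (j - 1) \<noteq> M (i - 1) j \<or> M i (j - 1) \<noteq> M i j"
  using assms unfolding corners_def mixed_diff_def by auto

lemma finite_corners: "finite (corners n M)"
  by (rule finite_subset[of _ "{..<n} \<times> {..<n}"]) (auto simp: corners_def)

lemma corners_transpose: "(i, j) \<in> corners n (\<lambda>i j. M j i) \<longleftrightarrow> (j, i) \<in> corners n M"
  using mixed_diff_transpose[of M i j] unfolding corners_def by auto

definition separates :: "nat set set \<Rightarrow> nat \<Rightarrow> nat \<Rightarrow> bool" where
  "separates P x y \<longleftrightarrow> (\<forall>X\<in>P. \<not> (x \<in> X \<and> y \<in> X))"

definition live_corners :: "nat \<Rightarrow> (nat \<Rightarrow> nat \<Rightarrow> bool) \<Rightarrow> division \<Rightarrow> (nat \<times> nat) set" where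
  "live_corners n M D =
     {(i, j) \<in> corners n M. separates (fst D) (i - 1) i \<and> separates (snd D) (j - 1) j}"

lemma finite_live_corners: "finite (live_corners n M D)"
  by (rule finite_subset[OF _ finite_corners]) (auto simp: live_corners_def)

lemma live_corners_transpose:
  "live_corners n M (R, C) = prod.swap ` live_corners n (\<lambda>i j. M j i) (C, R)"
proof -
  have "(i, j) \<in> live_corners n M (R, C) \<longleftrightarrow> (j, i) \<in> live_corners n (\<lambda>i j. M j i) (C, R)" for i j
    unfolding live_corners_def using corners_transpose[of j i n M] by auto
  then show ?thesis by (auto simp: pair_in_swap_image)
qed

lemma constant_cell_transpose: "constant_cell (\<lambda>i j. M j i) X Y = constant_cell M Y X"
  unfolding constant_cell_def by blast

lemma interval_partition_finite: "interval_partition n P \<Longrightarrow> finite P"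
proof -
  assume "interval_partition n P"
  then have "P \<subseteq> Pow {..<n}" unfolding interval_partition_def by blast
  then show "finite P" by (rule finite_subset) simp
qed

lemma merge_step_separates:
  assumes "merge_step P P'" and "separates P' x y"
  shows "separates P x y"
proof -
  obtain I J where P': "P' = insert (I \<union> J) (P - {I, J})"
    using assms(1) unfolding merge_step_def by blast
  have "\<exists>X'\<in>P'. X \<subseteq> X'" if "X \<in> P" for X
    using that unfolding P' by (cases "X = I \<or> X = J") auto
  then show ?thesis using assms(2) unfolding separates_def by blast
qed

lemma corner_in_nonconstant_cell:
  assumes R: "interval_partition n R" and corner: "(i, j) \<in> corners n M"
    and sep: "separates R (i - 1) i" and Y: "j - 1 \<in> Y" "j \<in> Y"
  shows "\<exists>X\<in>R. \<not> constant_cell M X Y \<and> (i = Suc (Max X) \<or> i = Min X)"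
proof -
  have i: "0 < i" "i < n" using corner unfolding corners_def by auto
  have UR: "\<Union>R = {..<n}" and intervals: "\<And>X. X \<in> R \<Longrightarrow> \<exists>a b. X = {a..b}"
    using R unfolding interval_partition_def by auto
  from corner_imp_row_change[OF corner] show ?thesis
  proof
    assume change: "M (i - 1) (j - 1) \<noteq> M (i - 1) j"
    obtain X where X: "X \<in> R" "i - 1 \<in> X" using UR i by (metis UnionE lessThan_iff less_imp_diff_less)
    have "i \<notin> X" using sep X unfolding separates_def by auto
    moreover obtain a b where "X = {a..b}" using intervals X by blast
    ultimately have "Max X = i - 1" using X i by (auto intro!: Max_eqI)
    moreover have "\<not> constant_cell M X Y"
      unfolding constant_cell_def using change X Y by blast
    ultimately show ?thesis using X i by auto
  next
    assume change: "M i (j - 1) \<noteq> M i j"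
    obtain X where X: "X \<in> R" "i \<in> X" using UR i by blast
    have "i - 1 \<notin> X" using sep X unfolding separates_def by auto
    moreover obtain a b where "X = {a..b}" using intervals X by blast
    ultimately have "Min X = i" using X i by (auto intro!: Min_eqI)
    moreover have "\<not> constant_cell M X Y"
      unfolding constant_cell_def using change X Y by blast
    ultimately show ?thesis using X by auto
  qed
qed

lemma killed_corner_merge_columns:
  assumes R: "interval_partition n R" and IJ: "I \<in> C" "J \<in> C" "I = {a..b}" "J = {Suc b..c}"
    and C': "C' = insert (I \<union> J) (C - {I, J})"
    and killed: "(i, j) \<in> live_corners n M (R, C) - live_corners n M (R, C')"
  shows "j = Suc b \<and> (\<exists>X\<in>R. \<not> constant_cell M X (I \<union> J) \<and> (i = Suc (Max X) \<or> i = Min X))"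
proof -
  have corner: "(i, j) \<in> corners n M" and sep: "separates R (i - 1) i"
    and sepC: "separates C (j - 1) j" and "\<not> separates C' (j - 1) j"
    using killed unfolding live_corners_def by auto
  then obtain Y where Y: "Y \<in> C'" "j - 1 \<in> Y" "j \<in> Y"
    unfolding separates_def by auto
  have "Y = I \<union> J"
    using Y sepC C' unfolding separates_def by auto
  with Y have joined: "j - 1 \<in> I \<union> J" "j \<in> I \<union> J" by auto
  have "\<not> (j - 1 \<in> I \<and> j \<in> I)" "\<not> (j - 1 \<in> J \<and> j \<in> J)"
    using sepC IJ(1,2) unfolding separates_def by auto
  moreover have "0 < j" using corner unfolding corners_def by simp
  ultimately have "j = Suc b" using joined IJ(3,4) by auto
  with corner_in_nonconstant_cell[OF R corner sep joined] show ?thesis by blast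
qed

lemma live_corners_merge_columns:
  assumes R: "interval_partition n R" and merge: "merge_step C C'"
    and wide: "\<forall>Y\<in>C'. card {X\<in>R. \<not> constant_cell M X Y} \<le> d"
  shows "live_corners n M (R, C') \<subseteq> live_corners n M (R, C)"
    and "card (live_corners n M (R, C) - live_corners n M (R, C')) \<le> 2 * d"
proof -
  show "live_corners n M (R, C') \<subseteq> live_corners n M (R, C)"
    unfolding live_corners_def using merge_step_separates[OF merge] by auto
next
  obtain I J a b c where IJ: "I \<in> C" "J \<in> C" "I = {a..b}" "J = {Suc b..c}"
    and C': "C' = insert (I \<union> J) (C - {I, J})"
    using merge unfolding merge_step_def by blast
  define N where "N = {X\<in>R. \<not> constant_cell M X (I \<union> J)}"
  have "finite N" unfolding N_def using interval_partition_finite[OF R] by simp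
  have "card N \<le> d" unfolding N_def using wide C' by auto
  have killed: "live_corners n M (R, C) - live_corners n M (R, C') \<subseteq>
      (\<lambda>X. (Suc (Max X), Suc b)) ` N \<union> (\<lambda>X. (Min X, Suc b)) ` N"
    using killed_corner_merge_columns[OF R IJ C'] unfolding N_def by fast
  have "card (live_corners n M (R, C) - live_corners n M (R, C')) \<le>
      card ((\<lambda>X. (Suc (Max X), Suc b)) ` N) + card ((\<lambda>X. (Min X, Suc b)) ` N)"
    by (rule order_trans[OF card_mono[OF _ killed] card_Un_le]) (use \<open>finite N\<close> in simp)
  also have "\<dots> \<le> card N + card N"
    by (intro add_mono card_image_le \<open>finite N\<close>)
  also have "\<dots> \<le> 2 * d"
    using \<open>card N \<le> d\<close> by linarith
  finally show "card (live_corners n M (R, C) - live_corners n M (R, C')) \<le> 2 * d" .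
qed

lemma live_corners_merge_rows:
  assumes C: "interval_partition n C" and merge: "merge_step R R'"
    and wide: "\<forall>X\<in>R'. card {Y\<in>C. \<not> constant_cell M X Y} \<le> d"
  shows "live_corners n M (R', C) \<subseteq> live_corners n M (R, C)"
    and "card (live_corners n M (R, C) - live_corners n M (R', C)) \<le> 2 * d"
proof -
  let ?Mt = "\<lambda>i j. M j i"
  have "\<forall>Y\<in>R'. card {X\<in>C. \<not> constant_cell ?Mt X Y} \<le> d"
    using wide by (simp add: constant_cell_transpose[of M])
  note transposed = live_corners_merge_columns[OF C merge this]
  have swap: "live_corners n M (R, C) = prod.swap ` live_corners n ?Mt (C, R)"
    "live_corners n M (R', C) = prod.swap ` live_corners n ?Mt (C, R')"
    by (rule live_corners_transpose)+
  show "live_corners n M (R', C) \<subseteq> live_corners n M (R, C)"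
    unfolding swap using transposed(1) by (rule image_mono)
  have "card (live_corners n M (R, C) - live_corners n M (R', C))
      = card (live_corners n ?Mt (C, R) - live_corners n ?Mt (C, R'))"
    unfolding swap by (simp add: image_set_diff[symmetric] card_image)
  then show "card (live_corners n M (R, C) - live_corners n M (R', C)) \<le> 2 * d"
    using transposed(2) by simp
qed

lemma card_live_corners_division_step:
  assumes "is_division n D" "is_division n D'" and "division_step D D'"
    and "wide_division d M D'"
  shows "card (live_corners n M D) \<le> card (live_corners n M D') + 2 * d"
proof -
  obtain R C R' C' where D: "D = (R, C)" "D' = (R', C')" by (cases D, cases D')
  from assms have sub: "live_corners n M D' \<subseteq> live_corners n M D"
    and killed: "card (live_corners n M D - live_corners n M D') \<le> 2 * d"
    unfolding D is_division_def division_step_def wide_division_def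
    using live_corners_merge_rows[of n C R R' M d] live_corners_merge_columns[of n R C C' M d]
    by auto
  have "card (live_corners n M D - live_corners n M D')
      = card (live_corners n M D) - card (live_corners n M D')"
    by (rule card_Diff_subset[OF finite_live_corners sub])
  moreover have "card (live_corners n M D') \<le> card (live_corners n M D)"
    by (rule card_mono[OF finite_live_corners sub])
  ultimately show ?thesis using killed by linarith
qed

lemma card_corners_le:
  assumes seq: "merge_sequence n ds" and wide: "\<forall>D\<in>set ds. wide_division d M D"
  shows "card (corners n M) \<le> 2 * d * (length ds - 1)"
proof -
  define L where "L = length ds"
  have "ds \<noteq> []" using seq unfolding merge_sequence_def by auto
  then have "1 \<le> L" unfolding L_def by (cases ds) auto
  have "ds ! (L - 1) = last ds"
    using \<open>ds \<noteq> []\<close> unfolding L_def by (simp add: last_conv_nth)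
  also have "\<dots> = ({{..<n}}, {{..<n}})"
    using seq unfolding merge_sequence_def by simp
  finally have "ds ! (L - 1) = ({{..<n}}, {{..<n}})" .
  then have none_live: "live_corners n M (ds ! (L - 1)) = {}"
    unfolding live_corners_def corners_def separates_def by auto
  have "ds ! 0 = (singletons n, singletons n)"
    using seq unfolding merge_sequence_def by (metis hd_conv_nth)
  then have all_live: "live_corners n M (ds ! 0) = corners n M"
    unfolding live_corners_def corners_def separates_def singletons_def by auto
  have "m \<le> L - 1 \<Longrightarrow> card (live_corners n M (ds ! (L - 1 - m))) \<le> 2 * d * m" for m
  proof (induction m)
    case 0
    then show ?case using none_live by simp
  next
    case (Suc m)
    define k where "k = L - 1 - Suc m"
    have k: "Suc k < L" "L - 1 - m = Suc k" using Suc.prems \<open>1 \<le> L\<close> unfolding k_def by auto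
    then have "card (live_corners n M (ds ! k)) \<le> card (live_corners n M (ds ! Suc k)) + 2 * d"
      using seq wide unfolding merge_sequence_def L_def
      by (intro card_live_corners_division_step) auto
    also have "\<dots> \<le> 2 * d * m + 2 * d" using Suc k by simp
    finally show ?case unfolding k_def by (simp add: algebra_simps)
  qed
  from this[of "L - 1"] show ?thesis using all_live L_def by simp
qed

section \<open>Matrix-vector products from the mixed differences\<close>

definition suffix_sum :: "(nat \<Rightarrow> real) \<Rightarrow> nat \<Rightarrow> nat \<Rightarrow> real" where
  "suffix_sum v n j = (\<Sum>z\<in>{j..<n}. v z)"

lemma sum_backward_diff:
  "(\<Sum>i<Suc x. h i - (if 0 < i then h (i - 1) else 0)) = (h x :: 'a :: ab_group_add)"
  by (induction x) auto

lemma sum_backward_diff_suffix_sum: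
  "(\<Sum>j<n. (h j - (if 0 < j then h (j - 1) else 0)) * suffix_sum v n j) = (\<Sum>j<n. h j * v j)"
proof (induction n)
  case 0
  then show ?case by simp
next
  case (Suc n)
  let ?D = "\<lambda>j. h j - (if 0 < j then h (j - 1) else 0)"
  have "(\<Sum>j<Suc n. ?D j * suffix_sum v (Suc n) j) = (\<Sum>j<Suc n. ?D j * suffix_sum v n j + ?D j * v n)"
    by (rule sum.cong) (auto simp: suffix_sum_def algebra_simps)
  also have "\<dots> = (\<Sum>j<Suc n. ?D j * suffix_sum v n j) + (\<Sum>j<Suc n. ?D j) * v n"
    by (simp only: sum.distrib sum_distrib_right)
  also have "(\<Sum>j<Suc n. ?D j * suffix_sum v n j) = (\<Sum>j<n. ?D j * suffix_sum v n j)"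
    by (simp add: suffix_sum_def)
  also have "(\<Sum>j<Suc n. ?D j) = h n"
    by (rule sum_backward_diff)
  finally show ?case using Suc.IH by simp
qed

lemma sum_mixed_diff_suffix_sum:
  assumes "x < n"
  shows "(\<Sum>i<n. \<Sum>j<n. if i \<le> x then of_int (mixed_diff M i j) * suffix_sum v n j else 0)
       = (\<Sum>j<n. of_bool (M x j) * v j)"
proof -
  define row_diff where
    "row_diff i j = of_bool (M i j) - (if 0 < i then of_bool (M (i - 1) j) else (0::real))" for i j
  have diff: "of_int (mixed_diff M i j) = row_diff i j - (if 0 < j then row_diff i (j - 1) else 0)"
    for i j
    unfolding row_diff_def mixed_diff_def by simp
  have "(\<Sum>i<n. \<Sum>j<n. if i \<le> x then of_int (mixed_diff M i j) * suffix_sum v n j else 0)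
      = (\<Sum>i<n. if i \<le> x then (\<Sum>j<n. row_diff i j * v j) else 0)"
    by (rule sum.cong) (auto simp: diff sum_backward_diff_suffix_sum)
  also have "\<dots> = (\<Sum>i<Suc x. \<Sum>j<n. row_diff i j * v j)"
  proof -
    have "{i\<in>{..<n}. i \<le> x} = {..<Suc x}" using assms by auto
    then show ?thesis by (simp add: sum.inter_filter[symmetric])
  qed
  also have "\<dots> = (\<Sum>j<n. (\<Sum>i<Suc x. row_diff i j) * v j)"
    by (simp only: sum.swap[of _ "{..<Suc x}"] sum_distrib_right)
  also have "\<dots> = (\<Sum>j<n. of_bool (M x j) * v j)"
    unfolding row_diff_def sum_backward_diff[of "\<lambda>i. of_bool (M i _)" x] ..
  finally show ?thesis .
qed

definition nonzero_diffs :: "(nat \<Rightarrow> nat \<Rightarrow> bool) \<Rightarrow> nat \<Rightarrow> nat \<Rightarrow> (nat \<times> nat \<times> int) list" where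
  "nonzero_diffs M n p = filter (\<lambda>(i, j, c). c \<noteq> 0)
     (map (\<lambda>q. (q div n, q mod n, mixed_diff M (q div n) (q mod n))) [0..<p])"

lemma nonzero_diffs_Suc:
  "nonzero_diffs M n (Suc p) = nonzero_diffs M n p @
     (if mixed_diff M (p div n) (p mod n) \<noteq> 0
      then [(p div n, p mod n, mixed_diff M (p div n) (p mod n))] else [])"
  unfolding nonzero_diffs_def by simp

lemma nonzero_diffs_in_range:
  assumes "(i, j, c) \<in> set (nonzero_diffs M n (n * n))"
  shows "i < n \<and> j < n"
proof -
  obtain q where q: "q < n * n" "i = q div n" "j = q mod n"
    using assms unfolding nonzero_diffs_def by auto
  then have "0 < n" by (cases n) auto
  with q show ?thesis by (simp add: less_mult_imp_div_less)
qed

lemma sum_lessThan_mult_div_mod: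
  "(\<Sum>q<m * n. G (q div n) (q mod n)) = (\<Sum>i<m. \<Sum>j<(n::nat). G i j)"
proof -
  have "(\<Sum>q\<in>{i * n..<i * n + n}. G (q div n) (q mod n)) = (\<Sum>j<n. G i j)" for i
  proof -
    have "(\<Sum>q\<in>{i * n..<i * n + n}. G (q div n) (q mod n))
        = (\<Sum>j\<in>{0..<n}. G ((j + i * n) div n) ((j + i * n) mod n))"
      by (subst sum.shift_bounds_nat_ivl[symmetric]) (simp add: add.commute)
    also have "\<dots> = (\<Sum>j<n. G i j)"
      by (rule sum.cong) auto
    finally show ?thesis .
  qed
  then show ?thesis
    using sum.nat_group[of "\<lambda>q. G (q div n) (q mod n)" n m] by simp
qed

lemma sum_nonzero_diffs:
  assumes "\<And>i j. g (i, j, 0) = (0::real)"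
  shows "(\<Sum>k<length (nonzero_diffs M n (n * n)). g (nonzero_diffs M n (n * n) ! k))
       = (\<Sum>i<n. \<Sum>j<n. g (i, j, mixed_diff M i j))"
proof -
  let ?entry = "\<lambda>q. (q div n, q mod n, mixed_diff M (q div n) (q mod n))"
  have "(\<Sum>k<length (nonzero_diffs M n (n * n)). g (nonzero_diffs M n (n * n) ! k))
      = sum_list (map g (nonzero_diffs M n (n * n)))"
    by (simp add: sum_list_sum_nth atLeast0LessThan)
  also have "\<dots> = sum_list (map g (map ?entry [0..<n * n]))"
    unfolding nonzero_diffs_def by (rule sum_list_map_filter) (auto simp: assms)
  also have "\<dots> = (\<Sum>q<n * n. g (?entry q))"
    by (simp add: sum_list_sum_nth atLeast0LessThan)
  also have "\<dots> = (\<Sum>i<n. \<Sum>j<n. g (i, j, mixed_diff M i j))"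
    by (rule sum_lessThan_mult_div_mod)
  finally show ?thesis .
qed

lemma sum_nonzero_diffs_rows:
  fixes M :: "nat \<Rightarrow> nat \<Rightarrow> bool"
  assumes "x < n"
  defines "L \<equiv> nonzero_diffs M n (n * n)"
  shows "(\<Sum>k<length L. if fst (L ! k) \<le> x
            then of_int (snd (snd (L ! k))) * suffix_sum v n (fst (snd (L ! k))) else 0)
       = (\<Sum>j<n. of_bool (M x j) * v j)"
proof -
  let ?g = "\<lambda>(i, j, c). if i \<le> x then of_int c * suffix_sum v n j else 0"
  have "(\<Sum>k<length L. if fst (L ! k) \<le> x
            then of_int (snd (snd (L ! k))) * suffix_sum v n (fst (snd (L ! k))) else 0)
      = (\<Sum>k<length L. ?g (L ! k))"
    by (rule sum.cong) (auto split: prod.splits)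
  also have "\<dots> = (\<Sum>i<n. \<Sum>j<n. ?g (i, j, mixed_diff M i j))"
    unfolding L_def by (rule sum_nonzero_diffs) simp
  also have "\<dots> = (\<Sum>j<n. of_bool (M x j) * v j)"
    using sum_mixed_diff_suffix_sum[OF assms(1)] by simp
  finally show ?thesis .
qed

lemma sum_nonzero_diffs_columns:
  fixes M :: "nat \<Rightarrow> nat \<Rightarrow> bool"
  assumes "x < n"
  defines "L \<equiv> nonzero_diffs M n (n * n)"
  shows "(\<Sum>k<length L. if fst (snd (L ! k)) \<le> x
            then of_int (snd (snd (L ! k))) * suffix_sum v n (fst (L ! k)) else 0)
       = (\<Sum>i<n. v i * of_bool (M i x))"
proof -
  let ?g = "\<lambda>(i, j, c). if j \<le> x then of_int c * suffix_sum v n i else 0"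
  have "(\<Sum>k<length L. if fst (snd (L ! k)) \<le> x
            then of_int (snd (snd (L ! k))) * suffix_sum v n (fst (L ! k)) else 0)
      = (\<Sum>k<length L. ?g (L ! k))"
    by (rule sum.cong) (auto split: prod.splits)
  also have "\<dots> = (\<Sum>i<n. \<Sum>j<n. ?g (i, j, mixed_diff M i j))"
    unfolding L_def by (rule sum_nonzero_diffs) simp
  also have "\<dots> = (\<Sum>j<n. \<Sum>i<n.
      if j \<le> x then of_int (mixed_diff (\<lambda>i j. M j i) j i) * suffix_sum v n i else 0)"
  proof -
    have flip: "mixed_diff (\<lambda>i j. M j i) j i = mixed_diff M i j" for i j
      by (rule mixed_diff_transpose)
    show ?thesis by (subst sum.swap) (simp only: flip prod.case)
  qed
  also have "\<dots> = (\<Sum>i<n. of_bool (M i x) * v i)"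
    by (rule sum_mixed_diff_suffix_sum[OF assms(1)])
  finally show ?thesis by (simp add: mult.commute)
qed

lemma length_nonzero_diffs_le: "length (nonzero_diffs M n (n * n)) \<le> card (corners n M) + 2 * n"
proof -
  let ?nonzero = "{(i, j). i < n \<and> j < n \<and> mixed_diff M i j \<noteq> 0}"
  have "length (nonzero_diffs M n (n * n))
      = card {q. q < n * n \<and> mixed_diff M (q div n) (q mod n) \<noteq> 0}"
    unfolding nonzero_diffs_def length_filter_conv_card
    by (intro arg_cong[where f = card] Collect_cong) auto
  also have "\<dots> \<le> card ?nonzero"
  proof (rule card_inj_on_le[where f = "\<lambda>q. (q div n, q mod n)"])
    show "inj_on (\<lambda>q. (q div n, q mod n)) {q. q < n * n \<and> mixed_diff M (q div n) (q mod n) \<noteq> 0}"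
      by (rule inj_onI) (metis div_mod_decomp prod.inject)
    show "(\<lambda>q. (q div n, q mod n)) ` {q. q < n * n \<and> mixed_diff M (q div n) (q mod n) \<noteq> 0} \<subseteq> ?nonzero"
      by (auto simp: less_mult_imp_div_less) (metis mod_less_divisor mult_0_right neq0_conv not_less_zero)
    show "finite ?nonzero"
      by (rule finite_subset[of _ "{..<n} \<times> {..<n}"]) auto
  qed
  also have "\<dots> \<le> card (corners n M \<union> ({0} \<times> {..<n} \<union> {..<n} \<times> {0}))"
    by (rule card_mono) (use finite_corners[of n M] in \<open>auto simp: corners_def\<close>)
  also have "\<dots> \<le> card (corners n M) + (card ({0::nat} \<times> {..<n}) + card ({..<n} \<times> {0::nat}))"
    by (intro order_trans[OF card_Un_le] add_left_mono card_Un_le)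
  finally show ?thesis by (simp add: card_cartesian_product)
qed

lemma twin_ordered_pos: "twin_ordered n d M \<Longrightarrow> 0 < n"
  unfolding twin_ordered_def merge_sequence_def by (cases n) auto

lemma length_nonzero_diffs_twin_ordered:
  assumes "twin_ordered n d M"
  shows "length (nonzero_diffs M n (n * n)) \<le> 4 * d * n + 2 * n"
proof -
  obtain ds where seq: "merge_sequence n ds" and wide: "\<forall>D\<in>set ds. wide_division d M D"
    using assms unfolding twin_ordered_def by blast
  have "length ds - 1 \<le> 2 * n"
    using seq unfolding merge_sequence_def by simp
  then have "card (corners n M) \<le> 2 * d * (2 * n)"
    using card_corners_le[OF seq wide] by (meson le_trans mult_le_mono2)
  then show ?thesis
    using length_nonzero_diffs_le[of M n] by simp
qed

section \<open>Preprocessing: listing the nonzero mixed differences\<close>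

text \<open>Integer memory layout: n at address 0 and M i j at 2 + i n + j, as given by pre_input;
  registers -1 and -2 hold the current row and column, -3 the number of triples stored so far,
  -4 the current mixed difference; the k-th triple (i, j, \<Delta> i j) occupies the addresses
  2 + n^2 + 3 k + f for f = 0, 1, 2.\<close>

abbreviation rd :: "int \<Rightarrow> iexp" where "rd a \<equiv> IRd (IConst a)"

definition matrix_read :: "iexp \<Rightarrow> iexp \<Rightarrow> iexp" where
  "matrix_read r c = IRd (IAdd (IConst 2) (IAdd (IMul r (rd 0)) c))"

definition triple_addr :: "nat \<Rightarrow> nat \<Rightarrow> int \<Rightarrow> int" where
  "triple_addr n k f = 2 + int n * int n + (3 * int k + f)"

definition triple_addr_exp :: "iexp \<Rightarrow> int \<Rightarrow> iexp" where
  "triple_addr_exp k f =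
     IAdd (IAdd (IConst 2) (IMul (rd 0) (rd 0))) (IAdd (IMul (IConst 3) k) (IConst f))"

definition compute_diff :: com where
  "compute_diff =
     Seq (IStore (IConst (-4)) (matrix_read (rd (-1)) (rd (-2))))
    (Seq (If (ILe (IConst 1) (rd (-1)))
           (IStore (IConst (-4)) (ISub (rd (-4)) (matrix_read (ISub (rd (-1)) (IConst 1)) (rd (-2)))))
           Skip)
    (Seq (If (ILe (IConst 1) (rd (-2)))
           (IStore (IConst (-4)) (ISub (rd (-4)) (matrix_read (rd (-1)) (ISub (rd (-2)) (IConst 1)))))
           Skip)
         (If (BAnd (ILe (IConst 1) (rd (-1))) (ILe (IConst 1) (rd (-2))))
           (IStore (IConst (-4))
              (IAdd (rd (-4)) (matrix_read (ISub (rd (-1)) (IConst 1)) (ISub (rd (-2)) (IConst 1)))))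
           Skip)))"

definition store_diff :: com where
  "store_diff =
     Seq (If (IEq (rd (-4)) (IConst 0)) Skip
           (Seq (IStore (triple_addr_exp (rd (-3)) 0) (rd (-1)))
           (Seq (IStore (triple_addr_exp (rd (-3)) 1) (rd (-2)))
           (Seq (IStore (triple_addr_exp (rd (-3)) 2) (rd (-4)))
                (IStore (IConst (-3)) (IAdd (rd (-3)) (IConst 1)))))))
         (IStore (IConst (-2)) (IAdd (rd (-2)) (IConst 1)))"

definition preprocess_step :: com where
  "preprocess_step = Seq compute_diff store_diff"

definition preprocess_columns :: com where
  "preprocess_columns = While (BNot (ILe (rd 0) (rd (-2)))) preprocess_step"

definition preprocess_row :: com where
  "preprocess_row =
     Seq (IStore (IConst (-2)) (IConst 0))
    (Seq preprocess_columns
         (IStore (IConst (-1)) (IAdd (rd (-1)) (IConst 1))))"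

definition preprocess :: com where
  "preprocess = While (BNot (ILe (rd 0) (rd (-1)))) preprocess_row"

definition holds_matrix :: "(nat \<Rightarrow> nat \<Rightarrow> bool) \<Rightarrow> nat \<Rightarrow> (int \<Rightarrow> int) \<Rightarrow> bool" where
  "holds_matrix M n m \<longleftrightarrow> (\<forall>a<n. \<forall>b<n. m (2 + (int a * int n + int b)) = of_bool (M a b))"

definition holds_triples :: "nat \<Rightarrow> (int \<Rightarrow> int) \<Rightarrow> (nat \<times> nat \<times> int) list \<Rightarrow> bool" where
  "holds_triples n m ts \<longleftrightarrow> (\<forall>k<length ts.
      m (triple_addr n k 0) = int (fst (ts ! k)) \<and>
      m (triple_addr n k 1) = int (fst (snd (ts ! k))) \<and>
      m (triple_addr n k 2) = snd (snd (ts ! k)))"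

definition preprocess_inv :: "(nat \<Rightarrow> nat \<Rightarrow> bool) \<Rightarrow> nat \<Rightarrow> nat \<Rightarrow> nat \<Rightarrow> state \<Rightarrow> bool" where
  "preprocess_inv M n i j s \<longleftrightarrow>
     snd s = (\<lambda>_. 0) \<and> fst s 0 = int n \<and> fst s (-1) = int i \<and> fst s (-2) = int j \<and>
     fst s (-3) = int (length (nonzero_diffs M n (i * n + j))) \<and>
     holds_matrix M n (fst s) \<and> holds_triples n (fst s) (nonzero_diffs M n (i * n + j))"

definition preprocess_row_inv :: "(nat \<Rightarrow> nat \<Rightarrow> bool) \<Rightarrow> nat \<Rightarrow> nat \<Rightarrow> state \<Rightarrow> bool" where
  "preprocess_row_inv M n i s \<longleftrightarrow>
     snd s = (\<lambda>_. 0) \<and> fst s 0 = int n \<and> fst s (-1) = int i \<and>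
     fst s (-3) = int (length (nonzero_diffs M n (i * n))) \<and>
     holds_matrix M n (fst s) \<and> holds_triples n (fst s) (nonzero_diffs M n (i * n))"

definition preprocessed :: "(nat \<Rightarrow> nat \<Rightarrow> bool) \<Rightarrow> nat \<Rightarrow> state \<Rightarrow> bool" where
  "preprocessed M n s \<longleftrightarrow>
     snd s = (\<lambda>_. 0) \<and> fst s 0 = int n \<and> fst s (-3) = int (length (nonzero_diffs M n (n * n))) \<and>
     holds_triples n (fst s) (nonzero_diffs M n (n * n))"

lemma row_major_index_less: "a < n \<Longrightarrow> b < n \<Longrightarrow> int a * int n + int b < int n * int n"
proof -
  assume a: "a < n" and b: "b < n"
  have "Suc a * n \<le> n * n" using a by (intro mult_le_mono1) simp
  then have "a * n + b < n * n" using b by simp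
  then have "int (a * n + b) < int (n * n)" by (simp only: of_nat_less_iff)
  then show ?thesis by simp
qed

lemma row_major_div_mod: "(j::nat) < n \<Longrightarrow> (i * n + j) div n = i \<and> (i * n + j) mod n = j"
proof -
  assume "j < n"
  then have "(j + i * n) div n = i" and "(j + i * n) mod n = j" by simp_all
  then show ?thesis by (simp add: add.commute)
qed

lemma numeral_add_square_pos [simp]: "0 < (numeral c::int) + int n * int n"
  by (simp add: add_pos_nonneg)

lemma triple_addr_ge: "0 \<le> f \<Longrightarrow> 2 + int n * int n \<le> triple_addr n k f"
  unfolding triple_addr_def by simp

lemma triple_addr_neq:
  "0 \<le> f \<Longrightarrow> x < 2 \<Longrightarrow> triple_addr n k f \<noteq> x"
  "0 \<le> f \<Longrightarrow> x < 2 \<Longrightarrow> x \<noteq> triple_addr n k f"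
  using triple_addr_ge[of f n k] zero_le_mult_iff[of "int n" "int n"] by linarith+

lemma triple_addr_inj:
  "triple_addr n k f = triple_addr n k' f' \<Longrightarrow> 0 \<le> f \<Longrightarrow> f < 3 \<Longrightarrow> 0 \<le> f' \<Longrightarrow> f' < 3 \<Longrightarrow>
    k = k' \<and> f = f'"
  unfolding triple_addr_def by presburger

lemma ieval_triple_addr_exp:
  "0 \<le> m 0 \<Longrightarrow> 0 \<le> ieval k m \<Longrightarrow>
    ieval (triple_addr_exp k f) m = triple_addr (nat (m 0)) (nat (ieval k m)) f"
  unfolding triple_addr_exp_def triple_addr_def by simp

lemma holds_matrix_upd:
  assumes "holds_matrix M n m" and "X < 2 \<or> 2 + int n * int n \<le> X"
  shows "holds_matrix M n (m(X := V))"
  unfolding holds_matrix_def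
proof (intro allI impI)
  fix a b assume ab: "a < n" "b < n"
  have "0 \<le> int a * int n + int b" by simp
  then have "2 + (int a * int n + int b) \<noteq> X"
    using row_major_index_less[OF ab] assms(2) by linarith
  then show "(m(X := V)) (2 + (int a * int n + int b)) = of_bool (M a b)"
    using assms(1) ab unfolding holds_matrix_def by simp
qed

lemma holds_matrix_read:
  assumes "holds_matrix M n m" "a < n" "b < n" "X < 0"
  shows "(m(X := V)) (2 + (int a * int n + int b)) = of_bool (M a b)"
proof -
  have "2 + (int a * int n + int b) \<noteq> X"
    using assms(4) zero_le_mult_iff[of "int a" "int n"] by linarith
  then show ?thesis using assms(1-3) unfolding holds_matrix_def by simp
qed

lemma holds_triples_upd:
  assumes "holds_triples n m ts" and "X < 2 + int n * int n"
  shows "holds_triples n (m(X := V)) ts"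
proof -
  have "triple_addr n k f \<noteq> X" if "0 \<le> f" for k f
    using triple_addr_ge[OF that, of n k] assms(2) by linarith
  then show ?thesis using assms(1) unfolding holds_triples_def by simp
qed

lemma holds_triples_append:
  assumes "holds_triples n m ts"
  shows "holds_triples n
    (m(triple_addr n (length ts) 0 := int a, triple_addr n (length ts) 1 := int b,
       triple_addr n (length ts) 2 := c)) (ts @ [(a, b, c)])"
  unfolding holds_triples_def
proof (intro allI impI)
  fix k assume k: "k < length (ts @ [(a, b, c)])"
  let ?K = "length ts"
  let ?m = "m(triple_addr n ?K 0 := int a, triple_addr n ?K 1 := int b, triple_addr n ?K 2 := c)"
  show "?m (triple_addr n k 0) = int (fst ((ts @ [(a, b, c)]) ! k)) \<and>
        ?m (triple_addr n k 1) = int (fst (snd ((ts @ [(a, b, c)]) ! k))) \<and>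
        ?m (triple_addr n k 2) = snd (snd ((ts @ [(a, b, c)]) ! k))"
  proof (cases "k < ?K")
    case True
    have "triple_addr n k f \<noteq> triple_addr n ?K g" if "0 \<le> f" "f < 3" "0 \<le> g" "g < 3" for f g
      using triple_addr_inj[of n k f ?K g] that True by auto
    then show ?thesis using assms True unfolding holds_triples_def by (auto simp: nth_append)
  next
    case False
    then have "k = ?K" using k by simp
    moreover have "triple_addr n ?K f \<noteq> triple_addr n ?K g"
      if "0 \<le> f" "f < 3" "0 \<le> g" "g < 3" "f \<noteq> g" for f g
      using triple_addr_inj[of n ?K f ?K g] that by auto
    ultimately show ?thesis by auto
  qed
qed

lemma compute_diff_correct:
  assumes inv: "preprocess_inv M n i j (m, r)" and ij: "i < n" "j < n"
  shows "terminates_within compute_diff (m, r) (\<lambda>s. s = (m(-4 := mixed_diff M i j), r)) 7"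
proof -
  have m: "m 0 = int n" "m (-1) = int i" "m (-2) = int j" and mat: "holds_matrix M n m"
    using inv unfolding preprocess_inv_def by auto
  have rd: "(m(-4 := V)) (2 + (int a * int n + int b)) = of_bool (M a b)" if "a < n" "b < n" for a b V
    by (rule holds_matrix_read[OF mat that]) simp
  have rd_up: "(m(-4 := V)) (2 + ((int i - 1) * int n + int j)) = of_bool (M (i - 1) j)"
    if "1 \<le> int i" for V
    using rd[of "i - 1" j V] that ij by (simp add: of_nat_diff)
  have rd_left: "(m(-4 := V)) (1 + (int i * int n + int j)) = of_bool (M i (j - 1))"
    if "1 \<le> j" for V
    using rd[of i "j - 1" V] that ij by (simp add: of_nat_diff)
  have rd_diag: "(m(-4 := V)) (1 + ((int i - 1) * int n + int j)) = of_bool (M (i - 1) (j - 1))"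
    if "1 \<le> i" "1 \<le> j" for V
    using rd[of "i - 1" "j - 1" V] that ij by (simp add: of_nat_diff)
  have rd_here: "m (2 + (int i * int n + int j)) = of_bool (M i j)"
    using mat ij unfolding holds_matrix_def by simp
  show ?thesis
    unfolding compute_diff_def matrix_read_def
    apply (intro terminates_within_Seq_IStore terminates_within_Seq_If terminates_within_Seq_Skip
        terminates_within_If terminates_within_IStore terminates_within_Skip)
    apply (simp_all del: fun_upd_apply
        add: fun_upd_other fun_upd_same m rd_here rd_up rd_left rd_diag mixed_diff_def)
    done
qed

lemma preprocess_inv_skip:
  assumes inv: "preprocess_inv M n i j (m, r)" and "j < n" and "mixed_diff M i j = 0"
  shows "preprocess_inv M n i (Suc j) (m(-4 := V, -2 := int j + 1), r)"
proof -
  have L: "nonzero_diffs M n (Suc (i * n + j)) = nonzero_diffs M n (i * n + j)"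
    using nonzero_diffs_Suc[of M n "i * n + j"] row_major_div_mod[OF assms(2), of i] assms(3) by simp
  have "holds_matrix M n m" and "holds_triples n m (nonzero_diffs M n (i * n + j))"
    using inv unfolding preprocess_inv_def by auto
  then have "holds_matrix M n (m(-4 := V, -2 := int j + 1))"
    and "holds_triples n (m(-4 := V, -2 := int j + 1)) (nonzero_diffs M n (i * n + j))"
    by (intro holds_matrix_upd holds_triples_upd; auto)+
  then show ?thesis using inv L unfolding preprocess_inv_def by simp
qed

lemma preprocess_inv_append:
  assumes inv: "preprocess_inv M n i j (m, r)" and "j < n" and "mixed_diff M i j \<noteq> 0"
  defines "K \<equiv> length (nonzero_diffs M n (i * n + j))"
  shows "preprocess_inv M n i (Suc j)
    (m(- 4 := mixed_diff M i j, triple_addr n K 0 := int i, triple_addr n K 1 := int j,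
       triple_addr n K 2 := mixed_diff M i j, - 3 := int K + 1, - 2 := int j + 1), r)"
proof -
  let ?m = "m(- 4 := mixed_diff M i j, triple_addr n K 0 := int i, triple_addr n K 1 := int j,
       triple_addr n K 2 := mixed_diff M i j)"
  have L: "nonzero_diffs M n (Suc (i * n + j)) = nonzero_diffs M n (i * n + j) @ [(i, j, mixed_diff M i j)]"
    using nonzero_diffs_Suc[of M n "i * n + j"] row_major_div_mod[OF assms(2), of i] assms(3) by simp
  have mat: "holds_matrix M n m" and "holds_triples n m (nonzero_diffs M n (i * n + j))"
    using inv unfolding preprocess_inv_def by auto
  then have "holds_triples n (m(- 4 := mixed_diff M i j)) (nonzero_diffs M n (i * n + j))"
    by (intro holds_triples_upd) auto
  from holds_triples_append[OF this] have "holds_triples n ?m (nonzero_diffs M n (Suc (i * n + j)))"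
    unfolding L K_def .
  then have "holds_triples n (?m(- 3 := int K + 1, - 2 := int j + 1)) (nonzero_diffs M n (Suc (i * n + j)))"
    by (rule holds_triples_upd[OF holds_triples_upd]) auto
  moreover have "holds_matrix M n (?m(- 3 := int K + 1, - 2 := int j + 1))"
    by (intro holds_matrix_upd mat) (auto simp: triple_addr_ge)
  ultimately show ?thesis
    using inv L unfolding preprocess_inv_def K_def
    by (simp del: fun_upd_apply add: fun_upd_other fun_upd_same triple_addr_neq)
qed

lemma store_diff_correct:
  assumes inv: "preprocess_inv M n i j (m, r)" and "j < n"
  shows "terminates_within store_diff (m(-4 := mixed_diff M i j), r) (preprocess_inv M n i (Suc j)) 7"
proof -
  have m: "m 0 = int n" "m (-1) = int i" "m (-2) = int j"
    "m (-3) = int (length (nonzero_diffs M n (i * n + j)))"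
    using inv unfolding preprocess_inv_def by auto
  show ?thesis
    unfolding store_diff_def
    apply (intro terminates_within_Seq_IStore terminates_within_Seq_If terminates_within_Seq_Skip
        terminates_within_If terminates_within_IStore terminates_within_Skip terminates_within_Seq_assoc)
    apply (simp_all del: fun_upd_apply
        add: fun_upd_other fun_upd_same m ieval_triple_addr_exp triple_addr_neq)
    using preprocess_inv_skip[OF inv \<open>j < n\<close>] preprocess_inv_append[OF inv \<open>j < n\<close>] by auto
qed

lemma preprocess_step_correct:
  assumes "preprocess_inv M n i j s" "i < n" "j < n"
  shows "terminates_within preprocess_step s (preprocess_inv M n i (Suc j)) 14"
proof -
  obtain m r where s: "s = (m, r)" by (cases s)
  have "terminates_within preprocess_step s (preprocess_inv M n i (Suc j)) (7 + 7)"
    unfolding preprocess_step_def s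
    by (rule terminates_within_Seq[OF compute_diff_correct[OF assms[unfolded s]]])
      (use store_diff_correct[OF assms(1)[unfolded s] assms(3)] in simp)
  then show ?thesis by simp
qed

lemma preprocess_columns_correct:
  assumes "preprocess_inv M n i 0 s" "i < n"
  shows "terminates_within preprocess_columns s (preprocess_inv M n i n) (n * Suc 14 + 1)"
  unfolding preprocess_columns_def
proof (rule terminates_within_While[where I = "preprocess_inv M n i"])
  fix k s assume "k < n" "preprocess_inv M n i k s"
  then show "beval (BNot (ILe (rd 0) (rd (-2)))) s \<and>
      terminates_within preprocess_step s (preprocess_inv M n i (Suc k)) 14"
    using preprocess_step_correct[of M n i k s] assms(2) unfolding preprocess_inv_def by auto
next
  fix s assume "preprocess_inv M n i n s"
  then show "\<not> beval (BNot (ILe (rd 0) (rd (-2)))) s" unfolding preprocess_inv_def by auto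
qed (rule assms(1))

lemma preprocess_row_correct:
  assumes inv: "preprocess_row_inv M n i (m, r)" and i: "i < n"
  shows "terminates_within preprocess_row (m, r) (preprocess_row_inv M n (Suc i)) (1 + ((n * Suc 14 + 1) + 1))"
  unfolding preprocess_row_def
proof (rule terminates_within_Seq[where Q = "preprocess_inv M n i 0"])
  show "terminates_within (IStore (IConst (- 2)) (IConst 0)) (m, r) (preprocess_inv M n i 0) 1"
    using inv unfolding preprocess_row_inv_def preprocess_inv_def
    by (intro terminates_within_IStore) (auto intro!: holds_matrix_upd holds_triples_upd)
next
  fix s' assume "preprocess_inv M n i 0 s'"
  show "terminates_within (Seq preprocess_columns (IStore (IConst (- 1)) (IAdd (rd (- 1)) (IConst 1)))) s'
      (preprocess_row_inv M n (Suc i)) ((n * Suc 14 + 1) + 1)"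
  proof (rule terminates_within_Seq[OF preprocess_columns_correct[OF \<open>preprocess_inv M n i 0 s'\<close> i]])
    fix s'' assume s'': "preprocess_inv M n i n s''"
    obtain m' r' where s''_eq: "s'' = (m', r')" by (cases s'')
    have next_row: "i * n + n = Suc i * n" by simp
    show "terminates_within (IStore (IConst (- 1)) (IAdd (rd (- 1)) (IConst 1))) s''
        (preprocess_row_inv M n (Suc i)) 1"
      using s'' unfolding s''_eq preprocess_row_inv_def preprocess_inv_def next_row
      by (intro terminates_within_IStore) (auto intro!: holds_matrix_upd holds_triples_upd)
  qed
qed

lemma preprocess_row_inv_init: "preprocess_row_inv M n 0 (pre_input n d M)"
proof -
  have "holds_matrix M n (fst (pre_input n d M))"
    unfolding holds_matrix_def
  proof (intro allI impI)
    fix a b assume ab: "a < n" "b < n"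
    define A where "A = int a * int n + int b"
    have "0 \<le> A" "A < int n * int n" "nat A = a * n + b"
      unfolding A_def using row_major_index_less[OF ab] by (simp_all add: nat_add_distrib nat_mult_distrib)
    moreover have "(a * n + b) div n = a" "(a * n + b) mod n = b"
      using row_major_div_mod[OF ab(2), of a] by auto
    ultimately have "fst (pre_input n d M) (2 + A) = of_bool (M a b)"
      unfolding pre_input_def of_bool_def by auto
    then show "fst (pre_input n d M) (2 + (int a * int n + int b)) = of_bool (M a b)"
      unfolding A_def .
  qed
  then show ?thesis
    unfolding preprocess_row_inv_def pre_input_def nonzero_diffs_def holds_triples_def by simp
qed

lemma preprocess_correct:
  "terminates_within preprocess (pre_input n d M) (preprocessed M n) (15 * n\<^sup>2 + 4 * n + 1)"
proof -
  have "terminates_within preprocess (pre_input n d M) (preprocess_row_inv M n n)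
      (n * Suc (1 + ((n * Suc 14 + 1) + 1)) + 1)"
    unfolding preprocess_def
  proof (rule terminates_within_While[where I = "preprocess_row_inv M n"])
    fix k s assume k: "k < n" and inv: "preprocess_row_inv M n k s"
    obtain m r where s: "s = (m, r)" by (cases s)
    show "beval (BNot (ILe (rd 0) (rd (-1)))) s \<and>
        terminates_within preprocess_row s (preprocess_row_inv M n (Suc k)) (1 + ((n * Suc 14 + 1) + 1))"
      using preprocess_row_correct[OF inv[unfolded s] k] inv k unfolding s preprocess_row_inv_def by auto
  next
    fix s assume "preprocess_row_inv M n n s"
    then show "\<not> beval (BNot (ILe (rd 0) (rd (-1)))) s" unfolding preprocess_row_inv_def by auto
  qed (rule preprocess_row_inv_init)
  then show ?thesis
    by (rule terminates_within_mono)
      (auto simp: power2_eq_square algebra_simps preprocess_row_inv_def preprocessed_def)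
qed
section \<open>Queries: suffix sums, one pass over the triples, prefix sums\<close>

text \<open>Real memory: the input v j sits at -(j + 1) and output x at out_addr n x = -(n + 1 + x);
  the suffix sums S j are stored at 1 + j, with S n at 1 + n still 0. Integer registers -5 and
  -6 are loop counters. Field oa of a triple selects the output it is added to and field ob the
  suffix sum it is multiplied with: query 0 1 computes M v and query 1 0 computes v^T M.\<close>

definition out_addr_exp :: "iexp \<Rightarrow> iexp" where
  "out_addr_exp e = ISub (ISub (IConst 0) (rd 0)) (IAdd (IConst 1) e)"

definition suffix_sum_step :: com where
  "suffix_sum_step =
     Seq (RStore (IAdd (IConst 1) (rd (-5)))
           (RAdd (RRd (IAdd (IConst 2) (rd (-5)))) (RRd (ISub (IConst (-1)) (rd (-5))))))
         (IStore (IConst (-5)) (ISub (rd (-5)) (IConst 1)))"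

definition scatter_step :: "int \<Rightarrow> int \<Rightarrow> com" where
  "scatter_step oa ob =
     Seq (RStore (out_addr_exp (IRd (triple_addr_exp (rd (-6)) oa)))
           (RAdd (RRd (out_addr_exp (IRd (triple_addr_exp (rd (-6)) oa))))
              (RMul (ROfInt (IRd (triple_addr_exp (rd (-6)) 2)))
                 (RRd (IAdd (IConst 1) (IRd (triple_addr_exp (rd (-6)) ob)))))))
         (IStore (IConst (-6)) (IAdd (rd (-6)) (IConst 1)))"

definition prefix_sum_step :: com where
  "prefix_sum_step =
     Seq (RStore (out_addr_exp (rd (-5)))
           (RAdd (RRd (out_addr_exp (rd (-5)))) (RRd (out_addr_exp (ISub (rd (-5)) (IConst 1))))))
         (IStore (IConst (-5)) (IAdd (rd (-5)) (IConst 1)))"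

definition suffix_sum_loop :: com where
  "suffix_sum_loop = While (ILe (IConst 0) (rd (-5))) suffix_sum_step"

definition scatter_loop :: "int \<Rightarrow> int \<Rightarrow> com" where
  "scatter_loop oa ob = While (BNot (ILe (rd (-3)) (rd (-6)))) (scatter_step oa ob)"

definition prefix_sum_loop :: com where
  "prefix_sum_loop = While (BNot (ILe (rd 0) (rd (-5)))) prefix_sum_step"

definition query :: "int \<Rightarrow> int \<Rightarrow> com" where
  "query oa ob =
     Seq (IStore (IConst (-5)) (ISub (rd 0) (IConst 1)))
    (Seq suffix_sum_loop
    (Seq (IStore (IConst (-6)) (IConst 0))
    (Seq (scatter_loop oa ob)
    (Seq (IStore (IConst (-5)) (IConst 1))
         prefix_sum_loop))))"

definition query_reals :: "nat \<Rightarrow> (nat \<Rightarrow> real) \<Rightarrow> int \<Rightarrow> real" where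
  "query_reals n v = (\<lambda>a. if - int n \<le> a \<and> a < 0 then v (nat (- a - 1)) else 0)"

lemma suffix_sum_eq_Suc: "j < n \<Longrightarrow> suffix_sum v n j = v j + suffix_sum v n (Suc j)"
  unfolding suffix_sum_def by (simp add: sum.atLeast_Suc_lessThan)

definition suffix_sum_inv :: "nat \<Rightarrow> (nat \<Rightarrow> real) \<Rightarrow> (int \<Rightarrow> int) \<Rightarrow> nat \<Rightarrow> state \<Rightarrow> bool" where
  "suffix_sum_inv n v m0 t s \<longleftrightarrow> fst s = m0(-5 := int n - 1 - int t) \<and>
     (\<forall>y\<le>n. n - t \<le> y \<longrightarrow> snd s (1 + int y) = suffix_sum v n y) \<and>
     (\<forall>y<n - t. snd s (-1 - int y) = v y) \<and>
     (\<forall>x<n. snd s (out_addr n x) = 0)"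

lemma suffix_sum_step_correct:
  assumes inv: "suffix_sum_inv n v m0 t (m, r)" and t: "t < n"
  shows "terminates_within suffix_sum_step (m, r) (suffix_sum_inv n v m0 (Suc t)) 2"
proof -
  have m: "m = m0(-5 := int n - 1 - int t)"
    and S: "\<And>y. y \<le> n \<Longrightarrow> n - t \<le> y \<Longrightarrow> r (1 + int y) = suffix_sum v n y"
    and V: "\<And>y. y < n - t \<Longrightarrow> r (-1 - int y) = v y"
    and O: "\<And>x. x < n \<Longrightarrow> r (out_addr n x) = 0"
    using inv unfolding suffix_sum_inv_def by auto
  define y0 where "y0 = n - 1 - t"
  have y0: "int y0 = int n - 1 - int t" "y0 < n" "Suc y0 = n - t" using t unfolding y0_def by auto
  have new_sum: "r (1 + (int n - int t)) + r (int t - int n) = suffix_sum v n y0"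
    using S[of "n - t"] V[of y0] suffix_sum_eq_Suc[OF y0(2), of v] t y0
    by (simp add: of_nat_diff add.commute)
  let ?r = "r(int n - int t := r (1 + (int n - int t)) + r (int t - int n))"
  show ?thesis
    unfolding suffix_sum_step_def
    apply (intro terminates_within_Seq_RStore terminates_within_IStore)
    apply (simp_all add: m)
    unfolding suffix_sum_inv_def
  proof (intro conjI allI impI)
    show "fst (m0(- 5 := int n - int t - 2), ?r) = m0(- 5 := int n - 1 - int (Suc t))" by simp
    fix y assume y: "y \<le> n" "n - Suc t \<le> y"
    show "snd (m0(- 5 := int n - int t - 2), ?r) (1 + int y) = suffix_sum v n y"
    proof (cases "y = y0")
      case True
      then show ?thesis using new_sum y0 by simp
    next
      case False
      then have "n - t \<le> y" and "1 + int y \<noteq> int n - int t" using y y0 unfolding y0_def by auto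
      then show ?thesis using S y by simp
    qed
  next
    fix y assume y: "y < n - Suc t"
    have "-1 - int y \<noteq> int n - int t" using t by auto
    then show "snd (m0(- 5 := int n - int t - 2), ?r) (-1 - int y) = v y" using V y by simp
  next
    fix x assume x: "x < n"
    have "out_addr n x \<noteq> int n - int t" using t unfolding out_addr_def by auto
    then show "snd (m0(- 5 := int n - int t - 2), ?r) (out_addr n x) = 0" using O x by simp
  qed
qed

lemma suffix_sum_loop_correct:
  assumes "suffix_sum_inv n v m0 0 s"
  shows "terminates_within suffix_sum_loop s (suffix_sum_inv n v m0 n) (n * Suc 2 + 1)"
  unfolding suffix_sum_loop_def
proof (rule terminates_within_While[where I = "suffix_sum_inv n v m0"])
  fix k s assume k: "k < n" and inv: "suffix_sum_inv n v m0 k s"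
  obtain m r where s: "s = (m, r)" by (cases s)
  show "beval (ILe (IConst 0) (rd (-5))) s \<and>
      terminates_within suffix_sum_step s (suffix_sum_inv n v m0 (Suc k)) 2"
    using suffix_sum_step_correct[OF inv[unfolded s] k] inv k unfolding s suffix_sum_inv_def by auto
next
  fix s assume "suffix_sum_inv n v m0 n s"
  then show "\<not> beval (ILe (IConst 0) (rd (-5))) s" unfolding suffix_sum_inv_def by auto
qed (rule assms)

definition bucket_sum ::
  "(nat \<Rightarrow> nat) \<Rightarrow> (nat \<Rightarrow> nat) \<Rightarrow> (nat \<Rightarrow> int) \<Rightarrow> (nat \<Rightarrow> real) \<Rightarrow> nat \<Rightarrow> nat \<Rightarrow> nat \<Rightarrow> real" where
  "bucket_sum A B C v n k x = (\<Sum>k'<k. if A k' = x then of_int (C k') * suffix_sum v n (B k') else 0)"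

definition bucket_prefix_sum ::
  "(nat \<Rightarrow> nat) \<Rightarrow> (nat \<Rightarrow> nat) \<Rightarrow> (nat \<Rightarrow> int) \<Rightarrow> (nat \<Rightarrow> real) \<Rightarrow> nat \<Rightarrow> nat \<Rightarrow> nat \<Rightarrow> real" where
  "bucket_prefix_sum A B C v n K x = (\<Sum>x'<Suc x. bucket_sum A B C v n K x')"

lemma bucket_prefix_sum_eq:
  assumes "\<forall>k<K. A k < n"
  shows "bucket_prefix_sum A B C v n K x
    = (\<Sum>k<K. if A k \<le> x then of_int (C k) * suffix_sum v n (B k) else 0)"
proof -
  have "bucket_prefix_sum A B C v n K x
      = (\<Sum>k<K. \<Sum>x'<Suc x. if A k = x' then of_int (C k) * suffix_sum v n (B k) else 0)"
    unfolding bucket_prefix_sum_def bucket_sum_def by (rule sum.swap)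
  also have "\<dots> = (\<Sum>k<K. if A k \<le> x then of_int (C k) * suffix_sum v n (B k) else 0)"
    by (rule sum.cong) (auto simp: sum.delta)
  finally show ?thesis .
qed

definition holds_fields ::
  "nat \<Rightarrow> (int \<Rightarrow> int) \<Rightarrow> nat \<Rightarrow> int \<Rightarrow> int \<Rightarrow> (nat \<Rightarrow> nat) \<Rightarrow> (nat \<Rightarrow> nat) \<Rightarrow> (nat \<Rightarrow> int) \<Rightarrow> bool" where
  "holds_fields n m0 K oa ob A B C \<longleftrightarrow> m0 0 = int n \<and> m0 (-3) = int K \<and> 0 \<le> oa \<and> 0 \<le> ob \<and>
     (\<forall>k<K. m0 (triple_addr n k oa) = int (A k) \<and> m0 (triple_addr n k ob) = int (B k) \<and>
        m0 (triple_addr n k 2) = C k \<and> A k < n \<and> B k < n)"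

definition scatter_inv :: "nat \<Rightarrow> (nat \<Rightarrow> real) \<Rightarrow> (int \<Rightarrow> int) \<Rightarrow>
    (nat \<Rightarrow> nat) \<Rightarrow> (nat \<Rightarrow> nat) \<Rightarrow> (nat \<Rightarrow> int) \<Rightarrow> nat \<Rightarrow> state \<Rightarrow> bool" where
  "scatter_inv n v m0 A B C k s \<longleftrightarrow> fst s = m0(-5 := -1, -6 := int k) \<and>
     (\<forall>y<n. snd s (1 + int y) = suffix_sum v n y) \<and>
     (\<forall>x<n. snd s (out_addr n x) = bucket_sum A B C v n k x)"

lemma scatter_step_correct:
  assumes inv: "scatter_inv n v m0 A B C k (m, r)"
    and fields: "holds_fields n m0 K oa ob A B C" and k: "k < K"
  shows "terminates_within (scatter_step oa ob) (m, r) (scatter_inv n v m0 A B C (Suc k)) 2"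
proof -
  have m: "m = m0(-5 := -1, -6 := int k)"
    and S: "\<And>y. y < n \<Longrightarrow> r (1 + int y) = suffix_sum v n y"
    and O: "\<And>x. x < n \<Longrightarrow> r (out_addr n x) = bucket_sum A B C v n k x"
    using inv unfolding scatter_inv_def by auto
  have e: "m0 0 = int n" "m0 (-3) = int K" "0 \<le> oa" "0 \<le> ob"
    "m0 (triple_addr n k oa) = int (A k)" "m0 (triple_addr n k ob) = int (B k)"
    "m0 (triple_addr n k 2) = C k" "A k < n" "B k < n"
    using fields k unfolding holds_fields_def by auto
  have out: "- int n - (1 + int (A k)) = out_addr n (A k)" unfolding out_addr_def by simp
  have bucket_Suc: "bucket_sum A B C v n (Suc k) x
      = bucket_sum A B C v n k x + (if A k = x then of_int (C k) * suffix_sum v n (B k) else 0)" for x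
    unfolding bucket_sum_def by simp
  let ?r = "r(- int n - (1 + int (A k)) :=
      r (- int n - (1 + int (A k))) + real_of_int (C k) * r (1 + int (B k)))"
  show ?thesis
    unfolding scatter_step_def out_addr_exp_def
    apply (intro terminates_within_Seq_RStore terminates_within_IStore)
    apply (simp_all del: fun_upd_apply
        add: fun_upd_other fun_upd_same m ieval_triple_addr_exp triple_addr_neq e)
    unfolding scatter_inv_def
  proof (intro conjI allI impI)
    show "fst (m0(- 5 := - 1, - 6 := int k + 1), ?r) = m0(- 5 := - 1, - 6 := int (Suc k))"
      by (simp add: add.commute)
    fix y assume y: "y < n"
    have "1 + int y \<noteq> - int n - (1 + int (A k))" by linarith
    then show "snd (m0(- 5 := - 1, - 6 := int k + 1), ?r) (1 + int y) = suffix_sum v n y"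
      using S y by simp
  next
    fix x assume x: "x < n"
    show "snd (m0(- 5 := - 1, - 6 := int k + 1), ?r) (out_addr n x) = bucket_sum A B C v n (Suc k) x"
    proof (cases "x = A k")
      case True
      then show ?thesis using out O[OF x] S[OF e(9)] bucket_Suc by simp
    next
      case False
      then have "out_addr n x \<noteq> - int n - (1 + int (A k))" unfolding out_addr_def by simp
      then show ?thesis using O[OF x] bucket_Suc False by auto
    qed
  qed
qed

lemma scatter_loop_correct:
  assumes "scatter_inv n v m0 A B C 0 s" and fields: "holds_fields n m0 K oa ob A B C"
  shows "terminates_within (scatter_loop oa ob) s (scatter_inv n v m0 A B C K) (K * Suc 2 + 1)"
  unfolding scatter_loop_def
proof (rule terminates_within_While[where I = "scatter_inv n v m0 A B C"])
  have K: "m0 (-3) = int K" using fields unfolding holds_fields_def by simp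
  {
    fix k s assume k: "k < K" and inv: "scatter_inv n v m0 A B C k s"
    obtain m r where s: "s = (m, r)" by (cases s)
    show "beval (BNot (ILe (rd (-3)) (rd (-6)))) s \<and>
        terminates_within (scatter_step oa ob) s (scatter_inv n v m0 A B C (Suc k)) 2"
      using scatter_step_correct[OF inv[unfolded s] fields k] inv k K unfolding s scatter_inv_def by auto
  }
  fix s assume "scatter_inv n v m0 A B C K s"
  then show "\<not> beval (BNot (ILe (rd (-3)) (rd (-6)))) s" using K unfolding scatter_inv_def by auto
qed (rule assms(1))

definition prefix_sum_inv :: "nat \<Rightarrow> (nat \<Rightarrow> real) \<Rightarrow> (int \<Rightarrow> int) \<Rightarrow>
    (nat \<Rightarrow> nat) \<Rightarrow> (nat \<Rightarrow> nat) \<Rightarrow> (nat \<Rightarrow> int) \<Rightarrow> nat \<Rightarrow> nat \<Rightarrow> state \<Rightarrow> bool" where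
  "prefix_sum_inv n v m0 A B C K t s \<longleftrightarrow> fst s = m0(-6 := int K, -5 := int t + 1) \<and>
     (\<forall>x<n. snd s (out_addr n x) =
        (if x \<le> t then bucket_prefix_sum A B C v n K x else bucket_sum A B C v n K x))"

lemma prefix_sum_step_correct:
  assumes inv: "prefix_sum_inv n v m0 A B C K t (m, r)" and t: "Suc t < n" and n: "m0 0 = int n"
  shows "terminates_within prefix_sum_step (m, r) (prefix_sum_inv n v m0 A B C K (Suc t)) 2"
proof -
  have m: "m = m0(-6 := int K, -5 := int t + 1)"
    and O: "\<And>x. x < n \<Longrightarrow> r (out_addr n x) =
      (if x \<le> t then bucket_prefix_sum A B C v n K x else bucket_sum A B C v n K x)"
    using inv unfolding prefix_sum_inv_def by auto
  have out: "- int n - (2 + int t) = out_addr n (Suc t)" "- int n - (1 + int t) = out_addr n t"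
    unfolding out_addr_def by simp_all
  let ?r = "r(- int n - (2 + int t) := r (- int n - (2 + int t)) + r (- int n - (1 + int t)))"
  show ?thesis
    unfolding prefix_sum_step_def out_addr_exp_def
    apply (intro terminates_within_Seq_RStore terminates_within_IStore)
    apply (simp_all add: m n)
    unfolding prefix_sum_inv_def
  proof (intro conjI allI impI)
    show "fst (m0(- 6 := int K, - 5 := 2 + int t), ?r) = m0(- 6 := int K, - 5 := int (Suc t) + 1)"
      by simp
    fix x assume x: "x < n"
    show "snd (m0(- 6 := int K, - 5 := 2 + int t), ?r) (out_addr n x) =
      (if x \<le> Suc t then bucket_prefix_sum A B C v n K x else bucket_sum A B C v n K x)"
    proof (cases "x = Suc t")
      case True
      have "bucket_prefix_sum A B C v n K (Suc t)
          = bucket_sum A B C v n K (Suc t) + bucket_prefix_sum A B C v n K t"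
        unfolding bucket_prefix_sum_def by simp
      then show ?thesis using True out O[OF t] O[of t] t by simp
    next
      case False
      then have "out_addr n x \<noteq> - int n - (2 + int t)" unfolding out_addr_def by simp
      then show ?thesis using O[OF x] False by auto
    qed
  qed
qed

lemma prefix_sum_loop_correct:
  assumes "prefix_sum_inv n v m0 A B C K 0 s" and n: "m0 0 = int n" "0 < n"
  shows "terminates_within prefix_sum_loop s (prefix_sum_inv n v m0 A B C K (n - 1))
    ((n - 1) * Suc 2 + 1)"
  unfolding prefix_sum_loop_def
proof (rule terminates_within_While[where I = "prefix_sum_inv n v m0 A B C K"])
  fix k s assume k: "k < n - 1" and inv: "prefix_sum_inv n v m0 A B C K k s"
  obtain m r where s: "s = (m, r)" by (cases s)
  have "Suc k < n" using k by simp
  show "beval (BNot (ILe (rd 0) (rd (-5)))) s \<and>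
      terminates_within prefix_sum_step s (prefix_sum_inv n v m0 A B C K (Suc k)) 2"
    using prefix_sum_step_correct[OF inv[unfolded s] \<open>Suc k < n\<close> n(1)] inv k n(1)
    unfolding s prefix_sum_inv_def by auto
next
  fix s assume "prefix_sum_inv n v m0 A B C K (n - 1) s"
  then show "\<not> beval (BNot (ILe (rd 0) (rd (-5)))) s" using n unfolding prefix_sum_inv_def by auto
qed (rule assms(1))

lemma query_correct:
  assumes fields: "holds_fields n m0 K oa ob A B C" and "0 < n"
  shows "terminates_within (query oa ob) (m0, query_reals n v)
    (\<lambda>s. \<forall>x<n. snd s (out_addr n x) = bucket_prefix_sum A B C v n K x) (6 * n + 3 * K + 3)"
proof -
  have n: "m0 0 = int n" using fields unfolding holds_fields_def by simp
  have start_suffix: "terminates_within (IStore (IConst (-5)) (ISub (rd 0) (IConst 1)))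
      (m0, query_reals n v) (suffix_sum_inv n v m0 0) 1"
    by (rule terminates_within_IStore)
      (auto simp: n suffix_sum_inv_def query_reals_def out_addr_def suffix_sum_def)
  have start_scatter: "terminates_within (IStore (IConst (-6)) (IConst 0)) s
      (scatter_inv n v m0 A B C 0) 1" if "suffix_sum_inv n v m0 n s" for s
  proof -
    obtain m r where s: "s = (m, r)" by (cases s)
    show ?thesis
      unfolding s by (rule terminates_within_IStore)
        (use that in \<open>auto simp: s suffix_sum_inv_def scatter_inv_def bucket_sum_def\<close>)
  qed
  have start_prefix: "terminates_within (IStore (IConst (-5)) (IConst 1)) s
      (prefix_sum_inv n v m0 A B C K 0) 1" if "scatter_inv n v m0 A B C K s" for s
  proof -
    obtain m r where s: "s = (m, r)" by (cases s)
    show ?thesis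
      unfolding s by (rule terminates_within_IStore)
        (use that in \<open>auto simp: s scatter_inv_def prefix_sum_inv_def bucket_prefix_sum_def fun_eq_iff\<close>)
  qed
  have "terminates_within (query oa ob) (m0, query_reals n v) (prefix_sum_inv n v m0 A B C K (n - 1))
      (1 + ((n * Suc 2 + 1) + (1 + ((K * Suc 2 + 1) + (1 + ((n - 1) * Suc 2 + 1))))))"
    unfolding query_def
    apply (rule terminates_within_Seq[OF start_suffix])
    apply (rule terminates_within_Seq[OF suffix_sum_loop_correct], assumption)
    apply (rule terminates_within_Seq[OF start_scatter], assumption)
    apply (rule terminates_within_Seq[OF scatter_loop_correct[OF _ fields]], assumption)
    apply (rule terminates_within_Seq[OF start_prefix], assumption)
    apply (rule prefix_sum_loop_correct, assumption, rule n, rule \<open>0 < n\<close>)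
    done
  then show ?thesis
    by (rule terminates_within_mono) (use \<open>0 < n\<close> in \<open>auto simp: prefix_sum_inv_def\<close>)
qed

lemma preprocessed_holds_fields:
  assumes "preprocessed M n s"
  defines "L \<equiv> nonzero_diffs M n (n * n)"
  shows "holds_fields n (fst s) (length L) 0 1
           (\<lambda>k. fst (L ! k)) (\<lambda>k. fst (snd (L ! k))) (\<lambda>k. snd (snd (L ! k)))"
    and "holds_fields n (fst s) (length L) 1 0
           (\<lambda>k. fst (snd (L ! k))) (\<lambda>k. fst (L ! k)) (\<lambda>k. snd (snd (L ! k)))"
proof -
  have "fst (L ! k) < n \<and> fst (snd (L ! k)) < n" if "k < length L" for k
    using nonzero_diffs_in_range[of "fst (L ! k)" "fst (snd (L ! k))" "snd (snd (L ! k))" M n]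
      nth_mem[OF that] unfolding L_def by simp
  with assms(1) show "holds_fields n (fst s) (length L) 0 1
           (\<lambda>k. fst (L ! k)) (\<lambda>k. fst (snd (L ! k))) (\<lambda>k. snd (snd (L ! k)))"
    and "holds_fields n (fst s) (length L) 1 0
           (\<lambda>k. fst (snd (L ! k))) (\<lambda>k. fst (L ! k)) (\<lambda>k. snd (snd (L ! k)))"
    unfolding preprocessed_def holds_triples_def holds_fields_def L_def by auto
qed

lemma query_input_preprocessed:
  "preprocessed M n s \<Longrightarrow> query_input n v s = (fst s, query_reals n v)"
  unfolding preprocessed_def query_input_def query_reals_def by auto

lemma query_matrix_vector:
  assumes "preprocessed M n s" and "0 < n"
    and "6 * n + 3 * length (nonzero_diffs M n (n * n)) + 3 \<le> T"
  shows "terminates_within (query 0 1) (query_input n v s)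
    (\<lambda>s'. \<forall>i<n. snd s' (out_addr n i) = (\<Sum>j<n. of_bool (M i j) * v j)) T"
proof -
  let ?L = "nonzero_diffs M n (n * n)"
  note fields = preprocessed_holds_fields(1)[OF assms(1)]
  have "\<forall>k<length ?L. fst (?L ! k) < n"
    using fields unfolding holds_fields_def by simp
  then have "bucket_prefix_sum (\<lambda>k. fst (?L ! k)) (\<lambda>k. fst (snd (?L ! k))) (\<lambda>k. snd (snd (?L ! k)))
      v n (length ?L) i = (\<Sum>j<n. of_bool (M i j) * v j)" if "i < n" for i
    using sum_nonzero_diffs_rows[OF that] by (simp add: bucket_prefix_sum_eq)
  then show ?thesis
    unfolding query_input_preprocessed[OF assms(1)]
    using terminates_within_mono[OF query_correct[OF fields assms(2)] assms(3)] by simp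
qed

lemma query_vector_matrix:
  assumes "preprocessed M n s" and "0 < n"
    and "6 * n + 3 * length (nonzero_diffs M n (n * n)) + 3 \<le> T"
  shows "terminates_within (query 1 0) (query_input n v s)
    (\<lambda>s'. \<forall>j<n. snd s' (out_addr n j) = (\<Sum>i<n. v i * of_bool (M i j))) T"
proof -
  let ?L = "nonzero_diffs M n (n * n)"
  note fields = preprocessed_holds_fields(2)[OF assms(1)]
  have "\<forall>k<length ?L. fst (snd (?L ! k)) < n"
    using fields unfolding holds_fields_def by simp
  then have "bucket_prefix_sum (\<lambda>k. fst (snd (?L ! k))) (\<lambda>k. fst (?L ! k)) (\<lambda>k. snd (snd (?L ! k)))
      v n (length ?L) j = (\<Sum>i<n. v i * of_bool (M i j))" if "j < n" for j
    using sum_nonzero_diffs_columns[OF that] by (simp add: bucket_prefix_sum_eq)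
  then show ?thesis
    unfolding query_input_preprocessed[OF assms(1)]
    using terminates_within_mono[OF query_correct[OF fields assms(2)] assms(3)] by simp
qed

lemma twin_ordered_products:
  assumes "1 \<le> d" and "twin_ordered n d M"
  shows "terminates_within preprocess (pre_input n d M)
    (\<lambda>s. \<forall>v. terminates_within (query 0 1) (query_input n v s)
               (\<lambda>s'. \<forall>i<n. snd s' (out_addr n i) = (\<Sum>j<n. of_bool (M i j) * v j)) (30 * (d * n)) \<and>
             terminates_within (query 1 0) (query_input n v s)
               (\<lambda>s'. \<forall>j<n. snd s' (out_addr n j) = (\<Sum>i<n. v i * of_bool (M i j))) (30 * (d * n)))
    (30 * (n\<^sup>2 + d * n))"
proof -
  have "0 < n" using assms(2) by (rule twin_ordered_pos)
  have K: "length (nonzero_diffs M n (n * n)) \<le> 4 * d * n + 2 * n"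
    using assms(2) by (rule length_nonzero_diffs_twin_ordered)
  have dn: "4 * d * n = 4 * (d * n)" "n \<le> d * n" "1 \<le> d * n" "n \<le> n\<^sup>2" "1 \<le> n"
    using assms(1) \<open>0 < n\<close> by (simp_all add: power2_eq_square)
  have query_time: "6 * n + 3 * length (nonzero_diffs M n (n * n)) + 3 \<le> 30 * (d * n)"
    using K dn by linarith
  have preprocess_time: "15 * n\<^sup>2 + 4 * n + 1 \<le> 30 * (n\<^sup>2 + d * n)"
    using dn distrib_left[of 30 "n\<^sup>2" "d * n"] by linarith
  show ?thesis
    by (rule terminates_within_mono[OF preprocess_correct preprocess_time])
      (blast intro: query_matrix_vector query_vector_matrix \<open>0 < n\<close> query_time)
qed

theorem theorem1:
  shows "\<exists>(C::nat) P Qcol Qrow.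
    \<forall>n d (M :: nat \<Rightarrow> nat \<Rightarrow> bool). 1 \<le> d \<longrightarrow> twin_ordered n d M \<longrightarrow>
      (\<exists>t s. big_step P (pre_input n d M) t s \<and> t \<le> C * (n ^ 2 + d * n) \<and>
        (\<forall>v :: nat \<Rightarrow> real.
          (\<exists>t' s'. big_step Qcol (query_input n v s) t' s' \<and> t' \<le> C * (d * n) \<and>
             (\<forall>i<n. snd s' (out_addr n i) = (\<Sum>j<n. of_bool (M i j) * v j))) \<and>
          (\<exists>t' s'. big_step Qrow (query_input n v s) t' s' \<and> t' \<le> C * (d * n) \<and>
             (\<forall>j<n. snd s' (out_addr n j) = (\<Sum>i<n. v i * of_bool (M i j))))))"
  by (rule exI[of _ 30], rule exI[of _ preprocess], rule exI[of _ "query 0 1"],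
      rule exI[of _ "query 1 0"], intro allI impI)
    (rule twin_ordered_products[unfolded terminates_within_def])

end
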